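(* Fix a ROMDP satisfying Assumptions 1 and 2 below, a deterministic observation-based policy $\pi$, and an action $l\in[A]$. Let $M_2^{(l)}=U\Sigma U^{\mathsf T}$ be an eigendecomposition of the second moment $M_2^{(l)}$. If all nonzero eigenvalues of $M_2^{(l)}$ have multiplicity 1, then there exist a mapping $\sigma^{(l)}:\mathcal X\to\mathcal X$ and multiplicative constants $\{C_i^{(l)}\}_{i\in[X]}$ such that for every $i\in\mathcal X_\pi^{(l)}$ and $j\in[Y]$, $[V_2^{(l)}]_{j,\sigma^{(l)}(i)}=C_i^{(l)}[U]_{j,i}$ (indexing the eigenvectors of nonzero eigenvalues by $i\in\mathcal X_\pi^{(l)}$). Consequently, defining for each $i\in\mathcal X_\pi^{(l)}$ the cluster $\widetilde{\mathcal Y}_i^{(l)}=\{j\in[Y]:[U]_{j,i}>0\}$, if $j,j'\in\widetilde{\mathcal Y}_i^{(l)}$ then $j,j'\in\mathcal Y_{\sigma^{(l)}(i)}$.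
   Context: A rich-observation MDP (ROMDP) consists of finite sets of hidden states $\mathcal X=[X]$, observations $\mathcal Y=[Y]$, actions $\mathcal A=[A]$ with $X\le Y$; transitions $T_{i',i,l}=\mathbb P(x'=i'\mid x=i,a=l)$; observation matrix $O_{j,i}=\mathbb P(y=j\mid x=i)$ with each observation $j$ having exactly one hidden state with $O_{j,i}>0$, and $\mathcal Y_i=\{j:O_{j,i}>0\}$; rewards depending on hidden state and action. Policies are deterministic maps $\pi:\mathcal Y\to\mathcal A$. Assumption 1: every such $\pi$ induces an ergodic Markov chain on hidden states. Assumption 2: each $T_{\cdot,\cdot,l}$ is full rank. For policy $\pi$: $\omega_\pi^{(l)}(i)=\mathbb P_\pi(x=i\mid a=l)$ under stationarity; $\mathcal X_\pi^{(l)}=\{i:\omega_\pi^{(l)}(i)>0\}$; with $\vec v_1,\vec v_2,\vec v_3\in\{0,1\}^Y$ the one-hot encodings of three consecutive observations $y_{t-1},y_t,y_{t+1}$ of the stationary process and $x_2,a_2$ the hidden state and action at time $t$, $[V_p^{(l)}]_{j,i}=\mathbb P(\vec v_p=e_j\mid x_2=i,a_2=l)$, in particular $V_2^{(l)}$ has columns indexed by $i\in\mathcal X_\pi^{(l)}$. $K_{p,q}^{(l)}=\mathbb E[\vec v_p\otimes\vec v_q\mid a_2=l]$; symmetrized views $\tilde v_1=K_{2,3}^{(l)}(K_{1,3}^{(l)})^\dagger\vec v_1$, $\tilde v_3=K_{2,1}^{(l)}(K_{3,1}^{(l)})^\dagger\vec v_3$; $M_2^{(l)}=\mathbb E[\tilde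 v_1\otimes\tilde v_3\mid a_2=l]=\sum_{i\in\mathcal X_\pi^{(l)}}\omega_\pi^{(l)}(i)[V_2^{(l)}]_{:,i}\otimes[V_2^{(l)}]_{:,i}$. *)

theory Defs
  imports "HOL-Analysis.Analysis"
begin

text \<open>ROMDP with hidden states 'x, observations 'y, actions 'a (finite types).
  T i' i l = P(x' = i' | x = i, a = l);  Ob j i = P(y = j | x = i).\<close>

definition romdp :: "('x::finite \<Rightarrow> 'x \<Rightarrow> 'a::finite \<Rightarrow> real) \<Rightarrow> ('y::finite \<Rightarrow> 'x \<Rightarrow> real) \<Rightarrow> bool" where
  "romdp T Ob \<longleftrightarrow>
     CARD('x) \<le> CARD('y) \<and>
     (\<forall>i' i l. T i' i l \<ge> 0) \<and> (\<forall>i l. (\<Sum>i'\<in>UNIV. T i' i l) = 1) \<and>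
     (\<forall>j i. Ob j i \<ge> 0) \<and> (\<forall>i. (\<Sum>j\<in>UNIV. Ob j i) = 1) \<and>
     (\<forall>j. \<exists>!i. Ob j i > 0)"

definition obs_set :: "('y \<Rightarrow> 'x \<Rightarrow> real) \<Rightarrow> 'x \<Rightarrow> 'y set" where
  "obs_set Ob i = {j. Ob j i > 0}"

definition pol_trans :: "('x \<Rightarrow> 'x \<Rightarrow> 'a \<Rightarrow> real) \<Rightarrow> ('y::finite \<Rightarrow> 'x \<Rightarrow> real) \<Rightarrow> ('y \<Rightarrow> 'a) \<Rightarrow> 'x \<Rightarrow> 'x \<Rightarrow> real" where
  "pol_trans T Ob pol i' i = (\<Sum>j\<in>UNIV. Ob j i * T i' i (pol j))"

fun nstep :: "('x::finite \<Rightarrow> 'x \<Rightarrow> real) \<Rightarrow> nat \<Rightarrow> 'x \<Rightarrow> 'x \<Rightarrow> real" where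
  "nstep P 0 i' i = (if i' = i then 1 else 0)"
| "nstep P (Suc n) i' i = (\<Sum>k\<in>UNIV. P i' k * nstep P n k i)"

definition irreducible_chain :: "('x::finite \<Rightarrow> 'x \<Rightarrow> real) \<Rightarrow> bool" where
  "irreducible_chain P \<longleftrightarrow> (\<forall>i i'. \<exists>n>0. nstep P n i' i > 0)"

definition aperiodic_chain :: "('x::finite \<Rightarrow> 'x \<Rightarrow> real) \<Rightarrow> bool" where
  "aperiodic_chain P \<longleftrightarrow> (\<forall>i. Gcd {n. n > 0 \<and> nstep P n i i > 0} = 1)"

definition ergodic_chain :: "('x::finite \<Rightarrow> 'x \<Rightarrow> real) \<Rightarrow> bool" where
  "ergodic_chain P \<longleftrightarrow> irreducible_chain P \<and> aperiodic_chain P"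

definition assumption1 :: "('x::finite \<Rightarrow> 'x \<Rightarrow> 'a \<Rightarrow> real) \<Rightarrow> ('y::finite \<Rightarrow> 'x \<Rightarrow> real) \<Rightarrow> bool" where
  "assumption1 T Ob \<longleftrightarrow> (\<forall>pol :: 'y \<Rightarrow> 'a. ergodic_chain (pol_trans T Ob pol))"

definition assumption2 :: "('x::finite \<Rightarrow> 'x \<Rightarrow> 'a \<Rightarrow> real) \<Rightarrow> bool" where
  "assumption2 T \<longleftrightarrow> (\<forall>l. rank (\<chi> i' i. T i' i l :: real^'x^'x) = CARD('x))"

definition stationary :: "('x::finite \<Rightarrow> 'x \<Rightarrow> 'a \<Rightarrow> real) \<Rightarrow> ('y::finite \<Rightarrow> 'x \<Rightarrow> real) \<Rightarrow> ('y \<Rightarrow> 'a) \<Rightarrow> 'x \<Rightarrow> real" where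
  "stationary T Ob pol = (THE rho. (\<forall>i. rho i \<ge> 0) \<and> (\<Sum>i\<in>UNIV. rho i) = 1 \<and>
       (\<forall>i'. rho i' = (\<Sum>i\<in>UNIV. pol_trans T Ob pol i' i * rho i)))"

definition joint_xya :: "('x::finite \<Rightarrow> 'x \<Rightarrow> 'a \<Rightarrow> real) \<Rightarrow> ('y::finite \<Rightarrow> 'x \<Rightarrow> real) \<Rightarrow> ('y \<Rightarrow> 'a) \<Rightarrow> 'x \<Rightarrow> 'y \<Rightarrow> 'a \<Rightarrow> real" where
  "joint_xya T Ob pol i j l = stationary T Ob pol i * Ob j i * (if pol j = l then 1 else 0)"

definition omega :: "('x::finite \<Rightarrow> 'x \<Rightarrow> 'a \<Rightarrow> real) \<Rightarrow> ('y::finite \<Rightarrow> 'x \<Rightarrow> real) \<Rightarrow> ('y \<Rightarrow> 'a) \<Rightarrow> 'a \<Rightarrow> 'x \<Rightarrow> real" where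
  "omega T Ob pol l i = (\<Sum>j\<in>UNIV. joint_xya T Ob pol i j l) /
                      (\<Sum>i'\<in>UNIV. \<Sum>j\<in>UNIV. joint_xya T Ob pol i' j l)"

definition Xpi :: "('x::finite \<Rightarrow> 'x \<Rightarrow> 'a \<Rightarrow> real) \<Rightarrow> ('y::finite \<Rightarrow> 'x \<Rightarrow> real) \<Rightarrow> ('y \<Rightarrow> 'a) \<Rightarrow> 'a \<Rightarrow> 'x set" where
  "Xpi T Ob pol l = {i. omega T Ob pol l i > 0}"

text \<open>[V_2^(l)]_{j,i} = P(y_t = j | x_t = i, a_t = l) (meaningful for i in X_pi^(l)).\<close>
definition V2 :: "('x::finite \<Rightarrow> 'x \<Rightarrow> 'a \<Rightarrow> real) \<Rightarrow> ('y::finite \<Rightarrow> 'x \<Rightarrow> real) \<Rightarrow> ('y \<Rightarrow> 'a) \<Rightarrow> 'a \<Rightarrow> 'y \<Rightarrow> 'x \<Rightarrow> real" where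
  "V2 T Ob pol l j i = joint_xya T Ob pol i j l / (\<Sum>j'\<in>UNIV. joint_xya T Ob pol i j' l)"

definition M2 :: "('x::finite \<Rightarrow> 'x \<Rightarrow> 'a \<Rightarrow> real) \<Rightarrow> ('y::finite \<Rightarrow> 'x \<Rightarrow> real) \<Rightarrow> ('y \<Rightarrow> 'a) \<Rightarrow> 'a \<Rightarrow> real^'y^'y" where
  "M2 T Ob pol l = (\<chi> j j'. \<Sum>i\<in>Xpi T Ob pol l. omega T Ob pol l i * V2 T Ob pol l j i * V2 T Ob pol l j' i)"

definition diag_mat :: "real^'n \<Rightarrow> real^'n^'n" where
  "diag_mat s = (\<chi> i k. if i = k then s $ i else 0)"

definition cluster :: "real^'n^'m \<Rightarrow> 'n \<Rightarrow> 'm set" where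
  "cluster U k = {j. U $ j $ k > 0}"

end

theory Submission imports Defs begin

text \<open>Because every observation is emitted by a single hidden state, the columns of
  \<open>V\<^sub>2\<close> have disjoint supports, so \<open>M\<^sub>2 = \<Sum>\<^sub>i \<omega>(i) v\<^sub>i v\<^sub>i\<^sup>T\<close> is a weighted sum of rank-one
  terms built from pairwise orthogonal vectors \<open>v\<^sub>i\<close>, each of which is an eigenvector of \<open>M\<^sub>2\<close>.
  An eigenvector \<open>u\<close> of \<open>M\<^sub>2\<close> for a nonzero eigenvalue \<open>\<lambda>\<close> lies in the span of the \<open>v\<^sub>i\<close>,
  so some \<open>v\<^sub>i\<close> is not orthogonal to it; by symmetry of \<open>M\<^sub>2\<close> that \<open>v\<^sub>i\<close> has eigenvalue \<open>\<lambda>\<close>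
  as well, and simplicity of \<open>\<lambda>\<close> forces \<open>v\<^sub>i\<close> to be a nonzero multiple of \<open>u\<close>. The positive
  entries of \<open>u\<close> therefore lie in the support of \<open>v\<^sub>i\<close>, i.e. in \<open>\<Y>\<^sub>i\<close>.\<close>

lemma diag_mat_mult_vector_component: "(diag_mat s *v z) $ i = s $ i * z $ i"
  by (simp add: matrix_vector_mult_def diag_mat_def if_distrib[of "\<lambda>a. a * _"] cong: if_cong)

lemma diag_mat_mult_axis: "diag_mat s *v axis k 1 = s $ k *\<^sub>R axis k 1"
  by (simp add: vec_eq_iff diag_mat_mult_vector_component axis_def)

lemma orthogonal_eigendecomposition_column:
  fixes U :: "real^'n^'n"
  assumes "orthogonal_matrix U"
  shows "(U ** diag_mat s ** transpose U) *v column k U = s $ k *\<^sub>R column k U"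
proof -
  have "transpose U ** U = mat 1" using assms by (simp add: orthogonal_matrix_def)
  then have "(U ** diag_mat s ** transpose U) *v (U *v axis k 1) = U *v (diag_mat s *v axis k 1)"
    by (metis matrix_mul_assoc matrix_mul_rid matrix_vector_mul_assoc)
  also have "\<dots> = s $ k *\<^sub>R (U *v axis k 1)"
    by (simp only: diag_mat_mult_axis matrix_vector_mult_scaleR)
  finally show ?thesis
    by (simp only: matrix_vector_mult_basis)
qed

lemma orthogonal_eigendecomposition_simple_eigenvector:
  fixes U :: "real^'n^'n"
  assumes orth: "orthogonal_matrix U"
    and simple: "\<forall>k k'. k \<noteq> k' \<and> s $ k \<noteq> 0 \<longrightarrow> s $ k \<noteq> s $ k'"
    and sk: "s $ k \<noteq> 0"
    and eigen: "(U ** diag_mat s ** transpose U) *v y = s $ k *\<^sub>R y"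
  shows "y = (transpose U *v y) $ k *\<^sub>R column k U"
proof -
  define z where "z = transpose U *v y"
  have UtU: "transpose U ** U = mat 1" and UUt: "U ** transpose U = mat 1"
    using orth by (auto simp: orthogonal_matrix_def)
  have "diag_mat s *v z = transpose U *v ((U ** diag_mat s ** transpose U) *v y)"
    unfolding z_def by (simp only: matrix_vector_mul_assoc matrix_mul_assoc UtU matrix_mul_lid)
  also have "\<dots> = s $ k *\<^sub>R z"
    unfolding eigen z_def by (simp add: matrix_vector_mult_scaleR)
  finally have "s $ k' * z $ k' = s $ k * z $ k'" for k'
    by (metis diag_mat_mult_vector_component vector_scaleR_component real_scaleR_def)
  moreover have "s $ k' \<noteq> s $ k" if "k' \<noteq> k" for k'
    using simple sk that by metis
  ultimately have z_axis: "z = z $ k *\<^sub>R axis k 1"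
    by (auto simp: vec_eq_iff axis_def)
  have "y = U *v z"
    unfolding z_def by (simp only: matrix_vector_mul_assoc UUt matrix_vector_mul_lid)
  also have "\<dots> = z $ k *\<^sub>R column k U"
    by (subst z_axis) (simp add: matrix_vector_mult_scaleR matrix_vector_mult_basis)
  finally show ?thesis unfolding z_def .
qed

lemma rank_one_sum_mult_vector:
  fixes v :: "'i \<Rightarrow> real^'n"
  shows "(\<chi> j j'. \<Sum>i\<in>X. w i * v i $ j * v i $ j') *v x = (\<Sum>i\<in>X. (w i * (v i \<bullet> x)) *\<^sub>R v i)"
proof -
  have "(\<Sum>j'\<in>UNIV. (\<Sum>i\<in>X. w i * v i $ j * v i $ j') * x $ j')
      = (\<Sum>i\<in>X. w i * (\<Sum>j'\<in>UNIV. v i $ j' * x $ j') * v i $ j)" for j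
    by (simp add: sum_distrib_left sum_distrib_right mult_ac sum.swap[of _ X])
  then show ?thesis
    by (simp add: vec_eq_iff matrix_vector_mult_def sum_component inner_vec_def)
qed

lemma orthogonal_sum_inner:
  fixes v :: "'i \<Rightarrow> 'a::real_inner"
  assumes "finite X" "pairwise (\<lambda>i i'. v i \<bullet> v i' = 0) X" "i \<in> X"
  shows "v i \<bullet> (\<Sum>i'\<in>X. c i' *\<^sub>R v i') = c i * (v i \<bullet> v i)"
proof -
  have "v i \<bullet> (\<Sum>i'\<in>X. c i' *\<^sub>R v i') = (\<Sum>i'\<in>X. if i' = i then c i * (v i \<bullet> v i) else 0)"
    unfolding inner_sum_right using assms(2,3) by (intro sum.cong) (auto simp: pairwise_def)
  then show ?thesis using assms(1,3) by simp
qed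

lemma orthogonal_rank_one_sum_eigenvector:
  fixes v :: "'i \<Rightarrow> 'a::real_inner"
  assumes "finite X" "pairwise (\<lambda>i i'. v i \<bullet> v i' = 0) X" "i \<in> X"
  shows "(\<Sum>i'\<in>X. (w i' * (v i' \<bullet> v i)) *\<^sub>R v i') = (w i * (v i \<bullet> v i)) *\<^sub>R v i"
proof -
  have "(\<Sum>i'\<in>X. (w i' * (v i' \<bullet> v i)) *\<^sub>R v i')
      = (\<Sum>i'\<in>X. if i' = i then (w i * (v i \<bullet> v i)) *\<^sub>R v i else 0)"
    using assms(2,3) by (intro sum.cong) (auto simp: pairwise_def)
  then show ?thesis using assms(1,3) by simp
qed

lemma simple_eigenvector_parallel_to_rank_one_component:
  fixes U :: "real^'n^'n" and v :: "'i \<Rightarrow> real^'n"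
  assumes orth: "orthogonal_matrix U"
    and simple: "\<forall>k k'. k \<noteq> k' \<and> s $ k \<noteq> 0 \<longrightarrow> s $ k \<noteq> s $ k'"
    and sk: "s $ k \<noteq> 0"
    and M: "\<And>x. (U ** diag_mat s ** transpose U) *v x = (\<Sum>i\<in>X. (w i * (v i \<bullet> x)) *\<^sub>R v i)"
    and X: "finite X" "pairwise (\<lambda>i i'. v i \<bullet> v i' = 0) X"
  shows "\<exists>i\<in>X. \<exists>c. c \<noteq> 0 \<and> v i = c *\<^sub>R column k U"
proof -
  define u where "u = column k U"
  have Mu: "(U ** diag_mat s ** transpose U) *v u = s $ k *\<^sub>R u"
    unfolding u_def using orth by (rule orthogonal_eigendecomposition_column)
  have "transpose U *v u = axis k 1"
    using orth unfolding u_def orthogonal_matrix_def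
    by (metis matrix_vector_mul_assoc matrix_vector_mul_lid matrix_vector_mult_basis)
  then have "u \<noteq> 0" by (metis axis_eq_0_iff matrix_vector_mult_0_right zero_neq_one)
  obtain i where i: "i \<in> X" "v i \<bullet> u \<noteq> 0"
  proof (rule ccontr)
    assume "\<not> thesis"
    then have "\<forall>i\<in>X. v i \<bullet> u = 0" using that by blast
    then have "s $ k *\<^sub>R u = 0" by (simp add: M flip: Mu)
    with sk \<open>u \<noteq> 0\<close> show False by simp
  qed
  have "s $ k * (v i \<bullet> u) = v i \<bullet> ((U ** diag_mat s ** transpose U) *v u)"
    by (simp add: Mu)
  also have "\<dots> = w i * (v i \<bullet> u) * (v i \<bullet> v i)"
    unfolding M by (rule orthogonal_sum_inner[OF X i(1)])
  finally have "s $ k * (v i \<bullet> u) = w i * (v i \<bullet> v i) * (v i \<bullet> u)"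
    by (simp add: mult_ac)
  with i(2) have eigenvalue: "w i * (v i \<bullet> v i) = s $ k" by simp
  have "(U ** diag_mat s ** transpose U) *v v i = s $ k *\<^sub>R v i"
    using orthogonal_rank_one_sum_eigenvector[OF X i(1)] by (simp add: M eigenvalue)
  then have "v i = (transpose U *v v i) $ k *\<^sub>R u"
    unfolding u_def by (rule orthogonal_eigendecomposition_simple_eigenvector[OF orth simple sk])
  moreover from this i(2) have "(transpose U *v v i) $ k \<noteq> 0" by auto
  ultimately show ?thesis using i(1) unfolding u_def by blast
qed

definition V2_column ::
  "('x::finite \<Rightarrow> 'x \<Rightarrow> 'a \<Rightarrow> real) \<Rightarrow> ('y::finite \<Rightarrow> 'x \<Rightarrow> real) \<Rightarrow> ('y \<Rightarrow> 'a) \<Rightarrow> 'a \<Rightarrow> 'x \<Rightarrow> real^'y"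
where
  "V2_column T Ob pol l i = (\<chi> j. V2 T Ob pol l j i)"

lemma M2_mult_vector:
  "M2 T Ob pol l *v x
     = (\<Sum>i\<in>Xpi T Ob pol l.
          (omega T Ob pol l i * (V2_column T Ob pol l i \<bullet> x)) *\<^sub>R V2_column T Ob pol l i)"
  using rank_one_sum_mult_vector[of "omega T Ob pol l" "V2_column T Ob pol l" "Xpi T Ob pol l" x]
  by (simp add: M2_def V2_column_def)

lemma V2_nonzero_imp_obs_set:
  assumes "romdp T Ob" "V2 T Ob pol l j i \<noteq> 0"
  shows "j \<in> obs_set Ob i"
proof -
  have "Ob j i \<noteq> 0" using assms(2) by (auto simp: V2_def joint_xya_def)
  moreover have "Ob j i \<ge> 0" using assms(1) by (simp add: romdp_def)
  ultimately show ?thesis by (simp add: obs_set_def)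
qed

lemma V2_columns_orthogonal:
  fixes T :: "'x::finite \<Rightarrow> 'x \<Rightarrow> 'a::finite \<Rightarrow> real" and X :: "'x set"
  assumes "romdp T Ob"
  shows "pairwise (\<lambda>i i'. V2_column T Ob pol l i \<bullet> V2_column T Ob pol l i' = 0) X"
proof (rule pairwiseI)
  fix i i' assume "i \<in> X" "i' \<in> X" "i \<noteq> i'"
  have "V2 T Ob pol l j i * V2 T Ob pol l j i' = 0" for j
  proof (rule ccontr)
    assume "V2 T Ob pol l j i * V2 T Ob pol l j i' \<noteq> 0"
    then have "Ob j i > 0" "Ob j i' > 0"
      using V2_nonzero_imp_obs_set[OF assms] by (auto simp: obs_set_def)
    with \<open>i \<noteq> i'\<close> assms show False unfolding romdp_def by metis
  qed
  then show "V2_column T Ob pol l i \<bullet> V2_column T Ob pol l i' = 0"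
    by (simp only: V2_column_def inner_vec_def vec_lambda_beta inner_real_def sum.neutral_const)
qed

theorem lemma9:
  fixes T :: "'x::finite \<Rightarrow> 'x \<Rightarrow> 'a::finite \<Rightarrow> real"
    and Ob :: "'y::finite \<Rightarrow> 'x \<Rightarrow> real"
    and pol :: "'y \<Rightarrow> 'a" and l :: 'a
    and U :: "real^'y^'y" and s :: "real^'y" and tau :: "'x \<Rightarrow> 'y"
  assumes "romdp T Ob" and "assumption1 T Ob" and "assumption2 T"
    and eig: "orthogonal_matrix U" "M2 T Ob pol l = U ** diag_mat s ** transpose U"
    and simple: "\<forall>k k'. k \<noteq> k' \<and> s $ k \<noteq> 0 \<longrightarrow> s $ k \<noteq> s $ k'"
    and idx: "bij_betw tau (Xpi T Ob pol l) {k. s $ k \<noteq> 0}"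
  shows "\<exists>(sigma :: 'x \<Rightarrow> 'x) (C :: 'x \<Rightarrow> real).
           sigma ` Xpi T Ob pol l \<subseteq> Xpi T Ob pol l \<and>
           (\<forall>i\<in>Xpi T Ob pol l. \<forall>j. V2 T Ob pol l j (sigma i) = C i * U $ j $ tau i) \<and>
           (\<forall>i\<in>Xpi T Ob pol l. \<forall>j j'. j \<in> cluster U (tau i) \<and> j' \<in> cluster U (tau i) \<longrightarrow>
                j \<in> obs_set Ob (sigma i) \<and> j' \<in> obs_set Ob (sigma i))"
proof -
  let ?X = "Xpi T Ob pol l" and ?v = "V2_column T Ob pol l"
  have M2: "(U ** diag_mat s ** transpose U) *v x
      = (\<Sum>i\<in>?X. (omega T Ob pol l i * (?v i \<bullet> x)) *\<^sub>R ?v i)" for x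
    unfolding eig(2)[symmetric] by (rule M2_mult_vector)
  have "\<forall>i\<in>?X. \<exists>i'\<in>?X. \<exists>c. c \<noteq> 0 \<and> ?v i' = c *\<^sub>R column (tau i) U"
  proof
    fix i assume "i \<in> ?X"
    then have "s $ tau i \<noteq> 0" using idx by (auto dest: bij_betw_apply)
    then show "\<exists>i'\<in>?X. \<exists>c. c \<noteq> 0 \<and> ?v i' = c *\<^sub>R column (tau i) U"
      using M2 V2_columns_orthogonal[OF \<open>romdp T Ob\<close>]
      by (intro simple_eigenvector_parallel_to_rank_one_component[OF eig(1) simple]) auto
  qed
  then obtain sigma C where sigma: "\<And>i. i \<in> ?X \<Longrightarrow>
      sigma i \<in> ?X \<and> C i \<noteq> 0 \<and> ?v (sigma i) = C i *\<^sub>R column (tau i) U"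
    by metis
  have V2_sigma: "V2 T Ob pol l j (sigma i) = C i * U $ j $ tau i" if "i \<in> ?X" for i j
  proof -
    have "?v (sigma i) $ j = (C i *\<^sub>R column (tau i) U) $ j" using sigma that by simp
    then show ?thesis by (simp add: V2_column_def column_def)
  qed
  have "j \<in> obs_set Ob (sigma i)" if "i \<in> ?X" "j \<in> cluster U (tau i)" for i j
  proof (rule V2_nonzero_imp_obs_set[OF \<open>romdp T Ob\<close>])
    show "V2 T Ob pol l j (sigma i) \<noteq> 0"
      using that sigma[of i] by (simp add: V2_sigma cluster_def)
  qed
  with sigma V2_sigma show ?thesis by blast
qed

end
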